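(* Consider the optimization problem MinE: $$\min_{\kappa,\bm{d},\bm{p},\bm{x}}\ \bm{p}^{\mathsf T}\bm{x}=\sum_{i\in\mathcal{I}}p_ix_i$$ subject to: - $\bm{x}=\bm{f}(\bm{h}(\bm{x},\bm{p},\kappa),\bm{d},\kappa)$; - $0<p_i\le p^{max}_i$ for all $i$; - $d_j\ge d^{min}_j$ for all $j$; - $0<x_i\le 1$ for all $i$; - $\kappa\in\{0,1\}^{n\times m}$ with every UE served by at least one cell. Here $\bm{p}^{max}\in\mathbb{R}^n_{>0}$ and $\bm{d}^{min}\in\mathbb{R}^m_{>0}$ are given. Then $\bm{d}=\bm{d}^{min}$ is optimal for MinE: the optimal (infimal) value of MinE is unchanged when the additional constraint $\bm{d}=\bm{d}^{min}$ is imposed.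
   Context: Cellular network model. $\mathcal{I}$ is a set of $n$ cells and $\mathcal{J}$ a set of $m$ UEs. For an association $\kappa\in\{0,1\}^{n\times m}$, let $\mathcal{I}_j=\{i:\kappa_{ij}=1\}$ and $\mathcal{J}_i=\{j:\kappa_{ij}=1\}$. $M,B>0$ are constants, $\sigma^2>0$ is the noise power and $g_{ij}>0$ are the channel gains. For a load vector $\bm{x}\in\mathbb{R}^n_{\ge0}$, a power vector $\bm{p}\in\mathbb{R}^n_{>0}$ and a demand vector $\bm{d}\in\mathbb{R}^m_{>0}$: - the SINR of UE $j$ is $h_j(\bm{x},\bm{p},\kappa)=\dfrac{\sum_{i\in\mathcal{I}_j}p_ig_{ij}}{\sum_{k\in\mathcal{I}\setminus\mathcal{I}_j}p_kg_{kj}x_k+\sigma^2}$; - the load of cell $i$ is $f_i(\bm{\gamma},\bm{d},\kappa)=\sum_{j\in\mathcal{J}_i}\dfrac{d_j}{MB\log_2(1+\gamma_j)}$; - $\bm{h}=(h_1,\dots,h_m)$ and $\bm{f}=(f_1,\dots,f_n)$. It is known, and assumed here, that for fixed $\bm{p},\bm{d},\kappa$ the map $\bm{x}\mapsto\bm{f}(\bm{h}(\bm{x},\bm{p},\kappa),\bm{d},\kappa)$ is a standard interference function with a unique fixed point. *)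

theory Defs
  imports Complex_Main
begin

text \<open>Cells are elements of a finite type 'c (the set I = UNIV), UEs elements of a
finite type 'u (the set J = UNIV). An association kappa is a 0/1 matrix, encoded
as a boolean relation: kappa i j = True iff kappa_ij = 1.\<close>

definition cells_of :: "('c \<Rightarrow> 'u \<Rightarrow> bool) \<Rightarrow> 'u \<Rightarrow> 'c set" where
  "cells_of \<kappa> j = {i. \<kappa> i j}"

definition ues_of :: "('c \<Rightarrow> 'u \<Rightarrow> bool) \<Rightarrow> 'c \<Rightarrow> 'u set" where
  "ues_of \<kappa> i = {j. \<kappa> i j}"

definition sinr ::
  "('c::finite \<Rightarrow> 'u \<Rightarrow> real) \<Rightarrow> real \<Rightarrow> ('c \<Rightarrow> real) \<Rightarrow> ('c \<Rightarrow> real)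
     \<Rightarrow> ('c \<Rightarrow> 'u \<Rightarrow> bool) \<Rightarrow> 'u \<Rightarrow> real" where
  "sinr g \<sigma>2 x p \<kappa> j =
     (\<Sum>i\<in>cells_of \<kappa> j. p i * g i j) /
     ((\<Sum>k\<in>UNIV - cells_of \<kappa> j. p k * g k j * x k) + \<sigma>2)"

definition load ::
  "real \<Rightarrow> real \<Rightarrow> ('u::finite \<Rightarrow> real) \<Rightarrow> ('u \<Rightarrow> real)
     \<Rightarrow> ('c \<Rightarrow> 'u \<Rightarrow> bool) \<Rightarrow> 'c \<Rightarrow> real" where
  "load M B \<gamma> d \<kappa> i = (\<Sum>j\<in>ues_of \<kappa> i. d j / (M * B * log 2 (1 + \<gamma> j)))"

definition MinE_feasible ::
  "real \<Rightarrow> real \<Rightarrow> real \<Rightarrow> ('c::finite \<Rightarrow> 'u::finite \<Rightarrow> real)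
     \<Rightarrow> ('c \<Rightarrow> real) \<Rightarrow> ('u \<Rightarrow> real)
     \<Rightarrow> (('c \<Rightarrow> 'u \<Rightarrow> bool) \<times> ('u \<Rightarrow> real) \<times> ('c \<Rightarrow> real) \<times> ('c \<Rightarrow> real)) set" where
  "MinE_feasible M B \<sigma>2 g pmax dmin =
     {(\<kappa>, d, p, x).
        (\<forall>i. x i = load M B (sinr g \<sigma>2 x p \<kappa>) d \<kappa> i) \<and>
        (\<forall>i. 0 < p i \<and> p i \<le> pmax i) \<and>
        (\<forall>j. d j \<ge> dmin j) \<and>
        (\<forall>i. 0 < x i \<and> x i \<le> 1) \<and>
        (\<forall>j. cells_of \<kappa> j \<noteq> {})}"

definition energy :: "('c::finite \<Rightarrow> real) \<Rightarrow> ('c \<Rightarrow> real) \<Rightarrow> real" where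
  "energy p x = (\<Sum>i\<in>UNIV. p i * x i)"

end

theory Submission
  imports Defs "HOL-Library.Function_Algebras"
begin

text \<open>Lowering the demands to \<open>dmin\<close> lowers the load map pointwise, and the load map is
monotone in the load vector (more interference means a lower SINR and hence a higher load).
So a feasible load vector \<open>x\<close> satisfies \<open>f(x) \<le> x\<close> for the load map \<open>f\<close> with demands \<open>dmin\<close>,
and Tarski's argument on the interval \<open>[0, x]\<close> yields a fixed point of \<open>f\<close> below \<open>x\<close>. It is
feasible with the same association and powers and consumes no more energy, so every feasible
point is dominated by one with \<open>d = dmin\<close>.\<close>

lemma monotone_has_fixed_point_below:
  fixes G :: "('a \<Rightarrow> 'b::conditionally_complete_lattice) \<Rightarrow> 'a \<Rightarrow> 'b"
  assumes G_mono: "\<And>y z. l \<le> y \<Longrightarrow> y \<le> z \<Longrightarrow> z \<le> x \<Longrightarrow> G y \<le> G z"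
    and "l \<le> G l" "l \<le> x" "G x \<le> x"
  shows "\<exists>y. l \<le> y \<and> y \<le> x \<and> G y = y"
proof -
  define S where "S = {y. l \<le> y \<and> y \<le> x \<and> G y \<le> y}"
  define y\<^sub>0 where "y\<^sub>0 i = (INF y\<in>S. y i)" for i
  have "x \<in> S"
    using assms by (simp add: S_def)
  have bdd: "bdd_below ((\<lambda>y. y i) ` S)" for i
    by (rule bdd_belowI2[of _ "l i"]) (auto simp: S_def le_fun_def)
  have y\<^sub>0_lower: "y\<^sub>0 \<le> y" if "y \<in> S" for y
    unfolding le_fun_def y\<^sub>0_def using bdd that by (auto intro: cINF_lower)
  have "l \<le> y\<^sub>0"
    unfolding le_fun_def y\<^sub>0_def using \<open>x \<in> S\<close> by (auto intro!: cINF_greatest simp: S_def le_fun_def)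
  have "y\<^sub>0 \<le> x"
    using y\<^sub>0_lower[OF \<open>x \<in> S\<close>] .
  have "G y\<^sub>0 i \<le> (INF y\<in>S. y i)" for i
  proof (rule cINF_greatest)
    show "S \<noteq> {}" using \<open>x \<in> S\<close> by blast
    fix y assume "y \<in> S"
    then have "G y\<^sub>0 \<le> G y" and "G y \<le> y"
      using G_mono[OF \<open>l \<le> y\<^sub>0\<close> y\<^sub>0_lower] by (auto simp: S_def)
    then show "G y\<^sub>0 i \<le> y i" by (auto simp: le_fun_def intro: order_trans)
  qed
  then have "G y\<^sub>0 \<le> y\<^sub>0"
    by (simp add: le_fun_def y\<^sub>0_def)
  have "l \<le> G y\<^sub>0"
    using \<open>l \<le> G l\<close> G_mono[OF order_refl \<open>l \<le> y\<^sub>0\<close> \<open>y\<^sub>0 \<le> x\<close>] by (rule order_trans)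
  then have "G y\<^sub>0 \<in> S"
    using \<open>G y\<^sub>0 \<le> y\<^sub>0\<close> \<open>y\<^sub>0 \<le> x\<close> G_mono[OF _ \<open>G y\<^sub>0 \<le> y\<^sub>0\<close> \<open>y\<^sub>0 \<le> x\<close>] by (auto simp: S_def)
  then have "G y\<^sub>0 = y\<^sub>0"
    using \<open>G y\<^sub>0 \<le> y\<^sub>0\<close> y\<^sub>0_lower by (simp add: antisym)
  with \<open>l \<le> y\<^sub>0\<close> \<open>y\<^sub>0 \<le> x\<close> show ?thesis by blast
qed

lemma INF_eq_INF_of_dominating_subset:
  fixes f :: "'a \<Rightarrow> 'b::conditionally_complete_lattice"
  assumes "B \<subseteq> A" "bdd_below (f ` A)" "\<And>a. a \<in> A \<Longrightarrow> \<exists>b\<in>B. f b \<le> f a"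
  shows "(INF a\<in>A. f a) = (INF b\<in>B. f b)"
proof (cases "A = {}")
  case False
  then have "B \<noteq> {}" using assms(3) by blast
  have "bdd_below (f ` B)" using assms(1,2) by (meson bdd_below_mono image_mono)
  show ?thesis
  proof (rule antisym)
    show "(INF a\<in>A. f a) \<le> (INF b\<in>B. f b)"
      using \<open>B \<noteq> {}\<close> assms(1,2) by (auto intro!: cINF_mono)
    show "(INF b\<in>B. f b) \<le> (INF a\<in>A. f a)"
      using False \<open>bdd_below (f ` B)\<close> assms(3) by (rule cINF_mono)
  qed
qed (use assms(1) in simp)

context
  fixes g :: "'c::finite \<Rightarrow> 'u::finite \<Rightarrow> real" and p :: "'c \<Rightarrow> real" and \<kappa> :: "'c \<Rightarrow> 'u \<Rightarrow> bool"
  assumes g_pos: "\<And>i j. g i j > 0" and p_pos: "\<And>i. p i > 0"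
begin

lemma sinr_pos:
  assumes "cells_of \<kappa> j \<noteq> {}" "\<sigma>2 > 0" "y \<ge> 0"
  shows "sinr g \<sigma>2 y p \<kappa> j > 0"
proof -
  have "(\<Sum>i\<in>cells_of \<kappa> j. p i * g i j) > 0"
    using assms(1) g_pos p_pos by (intro sum_pos) auto
  moreover have "(\<Sum>k\<in>UNIV - cells_of \<kappa> j. p k * g k j * y k) \<ge> 0"
    using assms(3) g_pos p_pos by (intro sum_nonneg) (simp add: le_fun_def less_imp_le)
  ultimately show ?thesis
    using assms(2) unfolding sinr_def by simp
qed

lemma sinr_antimono:
  assumes "cells_of \<kappa> j \<noteq> {}" "\<sigma>2 > 0" "0 \<le> y" "y \<le> z"
  shows "sinr g \<sigma>2 z p \<kappa> j \<le> sinr g \<sigma>2 y p \<kappa> j"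
proof -
  have "(\<Sum>i\<in>cells_of \<kappa> j. p i * g i j) > 0"
    using assms(1) g_pos p_pos by (intro sum_pos) auto
  moreover have "(\<Sum>k\<in>UNIV - cells_of \<kappa> j. p k * g k j * y k) \<ge> 0"
    using assms(3) g_pos p_pos by (intro sum_nonneg) (simp add: le_fun_def less_imp_le)
  moreover have "(\<Sum>k\<in>UNIV - cells_of \<kappa> j. p k * g k j * y k)
      \<le> (\<Sum>k\<in>UNIV - cells_of \<kappa> j. p k * g k j * z k)"
    using assms(4) g_pos p_pos by (intro sum_mono mult_left_mono) (auto simp: le_fun_def less_imp_le)
  ultimately show ?thesis
    using assms(2) unfolding sinr_def by (intro divide_left_mono) auto
qed

context
  fixes M B \<sigma>2 :: real
  assumes M_pos: "M > 0" and B_pos: "B > 0" and \<sigma>2_pos: "\<sigma>2 > 0"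
    and served: "\<And>j. cells_of \<kappa> j \<noteq> {}"
begin

lemma load_mono:
  assumes "0 \<le> y" "y \<le> z" "0 \<le> d'" "d' \<le> d"
  shows "load M B (sinr g \<sigma>2 y p \<kappa>) d' \<kappa> i \<le> load M B (sinr g \<sigma>2 z p \<kappa>) d \<kappa> i"
  unfolding load_def
proof (rule sum_mono)
  fix j
  have "sinr g \<sigma>2 z p \<kappa> j > 0"
    using sinr_pos[OF served \<sigma>2_pos] assms(1,2) by (meson order_trans)
  moreover have "sinr g \<sigma>2 z p \<kappa> j \<le> sinr g \<sigma>2 y p \<kappa> j"
    using sinr_antimono[OF served \<sigma>2_pos assms(1,2)] .
  ultimately have "0 < log 2 (1 + sinr g \<sigma>2 z p \<kappa> j)"
    and "log 2 (1 + sinr g \<sigma>2 z p \<kappa> j) \<le> log 2 (1 + sinr g \<sigma>2 y p \<kappa> j)"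
    by simp_all
  then show "d' j / (M * B * log 2 (1 + sinr g \<sigma>2 y p \<kappa> j))
      \<le> d j / (M * B * log 2 (1 + sinr g \<sigma>2 z p \<kappa> j))"
    using assms(3,4) M_pos B_pos by (intro frac_le) (auto simp: le_fun_def intro: order_trans)
qed

lemma load_pos:
  assumes "0 \<le> y" "\<And>j. d j > 0" "ues_of \<kappa> i \<noteq> {}"
  shows "load M B (sinr g \<sigma>2 y p \<kappa>) d \<kappa> i > 0"
  unfolding load_def
proof (rule sum_pos)
  fix j
  have "log 2 (1 + sinr g \<sigma>2 y p \<kappa> j) > 0"
    using sinr_pos[OF served \<sigma>2_pos assms(1), of j] by simp
  then show "0 < d j / (M * B * log 2 (1 + sinr g \<sigma>2 y p \<kappa> j))"
    using M_pos B_pos assms(2)[of j] by simp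
qed (use assms(3) in simp_all)

end

end

lemma MinE_feasible_dominated_by_dmin:
  assumes "M > 0" "B > 0" "\<sigma>2 > 0" "\<And>i j. g i j > 0" "\<And>j. dmin j > 0"
    and feasible: "(\<kappa>, d, p, x) \<in> MinE_feasible M B \<sigma>2 g pmax dmin"
  shows "\<exists>x'. (\<kappa>, dmin, p, x') \<in> MinE_feasible M B \<sigma>2 g pmax dmin \<and> energy p x' \<le> energy p x"
proof -
  have fixed: "\<And>i. x i = load M B (sinr g \<sigma>2 x p \<kappa>) d \<kappa> i"
    and p: "\<And>i. 0 < p i" "\<And>i. p i \<le> pmax i" and "dmin \<le> d"
    and x: "\<And>i. 0 < x i" "\<And>i. x i \<le> 1" and served: "\<And>j. cells_of \<kappa> j \<noteq> {}"
    using feasible by (auto simp: MinE_feasible_def le_fun_def)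
  have "0 \<le> dmin" "0 \<le> x"
    using assms(5) x(1) by (auto simp: le_fun_def less_imp_le)
  note load_mono = load_mono[where g = g and p = p and \<kappa> = \<kappa>, OF assms(4) p(1) assms(1-3) served]
    and load_pos = load_pos[where g = g and p = p and \<kappa> = \<kappa>, OF assms(4) p(1) assms(1-3) served]
  \<comment> \<open>A cell with no UE would have load \<open>0\<close>, contradicting \<open>x > 0\<close>.\<close>
  have busy: "ues_of \<kappa> i \<noteq> {}" for i
    using fixed[of i] x(1)[of i] by (auto simp: load_def)
  define G where "G y i = load M B (sinr g \<sigma>2 y p \<kappa>) dmin \<kappa> i" for y i
  have "G x \<le> x"
    unfolding G_def le_fun_def
    using load_mono[OF \<open>0 \<le> x\<close> order_refl \<open>0 \<le> dmin\<close> \<open>dmin \<le> d\<close>] fixed by simp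
  have "0 \<le> G 0"
    unfolding G_def le_fun_def
    using load_pos[OF order_refl assms(5) busy] by (simp add: less_imp_le)
  have G_mono: "G y \<le> G z" if "0 \<le> y" "y \<le> z" for y z
    unfolding G_def le_fun_def using load_mono[OF that \<open>0 \<le> dmin\<close> order_refl] by blast
  have "\<exists>x'. 0 \<le> x' \<and> x' \<le> x \<and> G x' = x'"
    by (rule monotone_has_fixed_point_below) (use G_mono \<open>0 \<le> G 0\<close> \<open>0 \<le> x\<close> \<open>G x \<le> x\<close> in auto)
  then obtain x' where "0 \<le> x'" "x' \<le> x" and x'_fixed: "\<And>i. x' i = G x' i"
    by auto
  have "x' i > 0" for i
    using load_pos[OF \<open>0 \<le> x'\<close> assms(5) busy] x'_fixed by (simp add: G_def)
  moreover have "x' i \<le> 1" for i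
    using \<open>x' \<le> x\<close> x(2) by (auto simp: le_fun_def intro: order_trans)
  ultimately have "(\<kappa>, dmin, p, x') \<in> MinE_feasible M B \<sigma>2 g pmax dmin"
    using p served x'_fixed by (simp add: MinE_feasible_def G_def)
  moreover have "energy p x' \<le> energy p x"
    unfolding energy_def using \<open>x' \<le> x\<close> p(1)
    by (intro sum_mono mult_left_mono) (auto simp: le_fun_def less_imp_le)
  ultimately show ?thesis by blast
qed

theorem proposition3:
  fixes M B \<sigma>2 :: real
    and g :: "'c::finite \<Rightarrow> 'u::finite \<Rightarrow> real"
    and pmax :: "'c \<Rightarrow> real" and dmin :: "'u \<Rightarrow> real"
  assumes "M > 0" "B > 0" "\<sigma>2 > 0"
    and "\<And>i j. g i j > 0"
    and "\<And>i. pmax i > 0" "\<And>j. dmin j > 0"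
  shows "(INF (\<kappa>, d, p, x) \<in> MinE_feasible M B \<sigma>2 g pmax dmin. energy p x)
       = (INF (\<kappa>, d, p, x) \<in> {s \<in> MinE_feasible M B \<sigma>2 g pmax dmin. fst (snd s) = dmin}.
            energy p x)"
proof (rule INF_eq_INF_of_dominating_subset)
  let ?A = "MinE_feasible M B \<sigma>2 g pmax dmin"
  show "bdd_below ((\<lambda>(\<kappa>, d, p, x). energy p x) ` ?A)"
    by (rule bdd_belowI2[of _ 0])
       (auto simp: MinE_feasible_def energy_def less_imp_le intro!: sum_nonneg)
  fix s assume "s \<in> ?A"
  then show "\<exists>s'\<in>{s \<in> ?A. fst (snd s) = dmin}.
      (\<lambda>(\<kappa>, d, p, x). energy p x) s' \<le> (\<lambda>(\<kappa>, d, p, x). energy p x) s"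
    using MinE_feasible_dominated_by_dmin[OF assms(1-4,6)] by (cases s) fastforce
qed simp

end
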